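(* Let $k\ge 2$ be an integer and let $\hat\lambda_k$ denote the value of $\lambda$ at the first double mode of the Poisson distribution of order $k$ (as defined in the context). Then $$\hat\lambda_k \ge \frac{2}{k+1}.$$
   Context: For an integer $k\ge1$ and a real $\lambda>0$, the Poisson distribution of order $k$ with parameter $\lambda$ is the distribution on $\{0,1,2,\dots\}$ with probability mass function $$f_k(n;\lambda)=e^{-k\lambda}\sum_{\substack{n_1,\dots,n_k\ge 0\\ n_1+2n_2+\dots+kn_k=n}}\frac{\lambda^{n_1+\dots+n_k}}{n_1!\cdots n_k!},\qquad n=0,1,2,\dots$$ A mode is any $n$ at which $f_k(n;\lambda)$ attains its global maximum over $n\ge0$. The distribution has a double mode at $m_1\neq m_2$ if $m_1$ and $m_2$ are exactly the two modes. The "first double mode" refers to the smallest value of $\lambda>0$, denoted $\hat\lambda_k$, at which the distribution has a double mode; at this value the two modes are $0$ and a positive integer $\hat m_k$. *)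

theory Defs
  imports Complex_Main
begin

definition poisson_k_idx :: "nat \<Rightarrow> nat \<Rightarrow> (nat \<Rightarrow> nat) set" where
  "poisson_k_idx k n = {c. (\<forall>i. i \<notin> {1..k} \<longrightarrow> c i = 0) \<and> (\<Sum>i=1..k. i * c i) = n}"

definition poisson_k_pmf :: "nat \<Rightarrow> real \<Rightarrow> nat \<Rightarrow> real" where
  "poisson_k_pmf k lam n = exp (- real k * lam) *
     (\<Sum>c\<in>poisson_k_idx k n. lam ^ (\<Sum>i=1..k. c i) / (\<Prod>i=1..k. fact (c i)))"

definition is_mode :: "nat \<Rightarrow> real \<Rightarrow> nat \<Rightarrow> bool" where
  "is_mode k lam n \<longleftrightarrow> (\<forall>m. poisson_k_pmf k lam m \<le> poisson_k_pmf k lam n)"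

definition has_double_mode :: "nat \<Rightarrow> real \<Rightarrow> bool" where
  "has_double_mode k lam \<longleftrightarrow>
     (\<exists>m1 m2. m1 \<noteq> m2 \<and> {n. is_mode k lam n} = {m1, m2})"

definition is_first_double_mode :: "nat \<Rightarrow> real \<Rightarrow> bool" where
  "is_first_double_mode k lam \<longleftrightarrow>
     lam > 0 \<and> has_double_mode k lam \<and> (\<forall>mu. 0 < mu \<and> mu < lam \<longrightarrow> \<not> has_double_mode k mu)"

end

theory Submission
  imports Defs
begin

text \<open>
  Up to the factor exp(-k\<lambda>), f_k(n;\<lambda>) is the coefficient g_n of x^n in
  exp(\<lambda>(x + ... + x^k)), and these coefficients satisfy
  n g_n = \<lambda> \<Sum>_{1 \<le> i \<le> min k n} i g_{n-i}
  (combinatorially: remove one part of size i from each index vector).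
  If \<lambda>(k+1) < 2, then \<lambda> m(m+1)/2 < m for 1 \<le> m \<le> k, so induction on n gives
  g_n < 1 = g_0 for all n \<ge> 1. Hence 0 is the unique mode, and no \<lambda> in
  (0, 2/(k+1)) yields a double mode.
\<close>

definition poisson_k_weight :: "nat \<Rightarrow> real \<Rightarrow> (nat \<Rightarrow> nat) \<Rightarrow> real" where
  "poisson_k_weight k lam c = lam ^ (\<Sum>i=1..k. c i) / (\<Prod>i=1..k. fact (c i))"

definition poisson_k_coeff :: "nat \<Rightarrow> real \<Rightarrow> nat \<Rightarrow> real" where
  "poisson_k_coeff k lam n = (\<Sum>c\<in>poisson_k_idx k n. poisson_k_weight k lam c)"

lemma poisson_k_pmf_eq_coeff:
  "poisson_k_pmf k lam n = exp (- real k * lam) * poisson_k_coeff k lam n"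
  unfolding poisson_k_pmf_def poisson_k_coeff_def poisson_k_weight_def ..

lemma poisson_k_idx_mult_le:
  assumes "c \<in> poisson_k_idx k n"
  shows "i * c i \<le> n"
proof (cases "i \<in> {1..k}")
  case True
  have "i * c i \<le> (\<Sum>j=1..k. j * c j)"
    using True by (intro member_le_sum) auto
  with assms show ?thesis
    unfolding poisson_k_idx_def by simp
next
  case False
  with assms show ?thesis
    unfolding poisson_k_idx_def by simp
qed

lemma finite_poisson_k_idx: "finite (poisson_k_idx k n)"
proof (rule finite_subset)
  show "poisson_k_idx k n \<subseteq> {c. \<forall>i. (i \<in> {1..k} \<longrightarrow> c i \<in> {0..n}) \<and> (i \<notin> {1..k} \<longrightarrow> c i = 0)}"
  proof safe
    fix c i assume c: "c \<in> poisson_k_idx k n" and "i \<in> {1..k}"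
    then have "c i \<le> i * c i" by simp
    also have "\<dots> \<le> n" using c by (rule poisson_k_idx_mult_le)
    finally show "c i \<in> {0..n}" by simp
  qed (auto simp: poisson_k_idx_def)
  show "finite {c. \<forall>i. (i \<in> {1..k} \<longrightarrow> c i \<in> {0..n}) \<and> (i \<notin> {1..k} \<longrightarrow> c i = 0)}"
    by (rule finite_set_of_finite_funs) auto
qed

lemma poisson_k_idx_0: "poisson_k_idx k 0 = {\<lambda>_. 0}"
proof -
  have "c = (\<lambda>_. 0)" if "c \<in> poisson_k_idx k 0" for c
  proof
    fix i
    show "c i = 0"
      using poisson_k_idx_mult_le[OF that, of i] that
      by (cases "i = 0") (auto simp: poisson_k_idx_def)
  qed
  then show ?thesis
    by (auto simp: poisson_k_idx_def)
qed

lemma poisson_k_coeff_0: "poisson_k_coeff k lam 0 = 1"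
  unfolding poisson_k_coeff_def poisson_k_idx_0 poisson_k_weight_def by simp

lemma sum_fun_upd:
  assumes "finite A" "i \<in> A"
  shows "(\<Sum>j\<in>A. f j ((c(i := v)) j)) = f i v + (\<Sum>j\<in>A-{i}. f j (c j))"
  using assms by (simp add: sum.remove)

lemma prod_fun_upd:
  assumes "finite A" "i \<in> A"
  shows "(\<Prod>j\<in>A. f j ((c(i := v)) j)) = f i v * (\<Prod>j\<in>A-{i}. f j (c j))"
  using assms by (simp add: prod.remove)

lemma fun_upd_in_poisson_k_idx:
  assumes "c \<in> poisson_k_idx k n" "i \<in> {1..k}" "n + i * v = m + i * c i"
  shows "c(i := v) \<in> poisson_k_idx k m"
proof -
  have "(\<Sum>j=1..k. j * (c(i := v)) j) + i * c i = i * v + (\<Sum>j\<in>{1..k}-{i}. j * c j) + i * c i"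
    using sum_fun_upd[of "{1..k}" i "\<lambda>j x. j * x"] assms(2) by simp
  also have "\<dots> = (\<Sum>j=1..k. j * c j) + i * v"
    using assms(2) by (simp add: sum.remove)
  finally show ?thesis
    using assms unfolding poisson_k_idx_def by auto
qed

lemma poisson_k_weight_fun_upd_Suc:
  assumes "i \<in> {1..k}"
  shows "real (Suc (c i)) * poisson_k_weight k lam (c(i := Suc (c i)))
    = lam * poisson_k_weight k lam c"
proof -
  define S where "S = (\<Sum>j\<in>{1..k}-{i}. c j)"
  define P where "P = (\<Prod>j\<in>{1..k}-{i}. fact (c j) :: real)"
  have "P > 0"
    unfolding P_def by (intro prod_pos) auto
  have weight_c: "poisson_k_weight k lam c = lam ^ (c i + S) / (fact (c i) * P)"
    using assms unfolding poisson_k_weight_def S_def P_def by (simp add: sum.remove prod.remove)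
  have "(\<Sum>j=1..k. (c(i := Suc (c i))) j) = Suc (c i) + S"
    using assms sum_fun_upd[of "{1..k}" i "\<lambda>_ x. x" c "Suc (c i)"] unfolding S_def by simp
  moreover have "(\<Prod>j=1..k. fact ((c(i := Suc (c i))) j)) = fact (Suc (c i)) * P"
    using assms prod_fun_upd[of "{1..k}" i "\<lambda>_ x. fact x :: real" c "Suc (c i)"] unfolding P_def by simp
  ultimately have "poisson_k_weight k lam (c(i := Suc (c i)))
      = lam ^ (Suc (c i) + S) / (fact (Suc (c i)) * P)"
    unfolding poisson_k_weight_def by (simp only:)
  with \<open>P > 0\<close> show ?thesis
    unfolding weight_c by (simp add: field_simps del: of_nat_Suc)
qed

lemma bij_betw_poisson_k_idx_fun_upd_Suc:
  assumes "i \<in> {1..k}" "i \<le> n"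
  shows "bij_betw (\<lambda>c. c(i := Suc (c i))) (poisson_k_idx k (n - i)) {c \<in> poisson_k_idx k n. 0 < c i}"
proof (rule bij_betw_byWitness[where f' = "\<lambda>c. c(i := c i - 1)"])
  show "(\<lambda>c. c(i := Suc (c i))) ` poisson_k_idx k (n - i) \<subseteq> {c \<in> poisson_k_idx k n. 0 < c i}"
    using assms by (auto intro!: fun_upd_in_poisson_k_idx)
  show "(\<lambda>c. c(i := c i - 1)) ` {c \<in> poisson_k_idx k n. 0 < c i} \<subseteq> poisson_k_idx k (n - i)"
  proof clarify
    fix c assume c: "c \<in> poisson_k_idx k n" "0 < c i"
    then have "i * (c i - 1) + i = i * c i" "i * c i \<le> n"
      using poisson_k_idx_mult_le by (auto simp: algebra_simps)
    with c assms(1) show "c(i := c i - 1) \<in> poisson_k_idx k (n - i)"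
      by (intro fun_upd_in_poisson_k_idx) auto
  qed
qed auto

lemma sum_poisson_k_idx_mult_weight:
  assumes "i \<in> {1..k}"
  shows "(\<Sum>c\<in>poisson_k_idx k n. real (c i) * poisson_k_weight k lam c)
    = (if i \<le> n then lam * poisson_k_coeff k lam (n - i) else 0)"
proof (cases "i \<le> n")
  case True
  have "(\<Sum>c\<in>poisson_k_idx k n. real (c i) * poisson_k_weight k lam c)
      = (\<Sum>c\<in>{c \<in> poisson_k_idx k n. 0 < c i}. real (c i) * poisson_k_weight k lam c)"
    by (rule sum.mono_neutral_right) (auto simp: finite_poisson_k_idx)
  also have "\<dots> = (\<Sum>c\<in>poisson_k_idx k (n - i).
      real ((c(i := Suc (c i))) i) * poisson_k_weight k lam (c(i := Suc (c i))))"
    by (rule sum.reindex_bij_betw[OF bij_betw_poisson_k_idx_fun_upd_Suc[OF assms True], symmetric])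
  also have "\<dots> = lam * poisson_k_coeff k lam (n - i)"
    unfolding fun_upd_same poisson_k_weight_fun_upd_Suc[OF assms] poisson_k_coeff_def
    by (simp add: sum_distrib_left)
  finally show ?thesis
    using True by simp
next
  case False
  have "c i = 0" if "c \<in> poisson_k_idx k n" for c
    using poisson_k_idx_mult_le[OF that, of i] False by (cases "c i") auto
  with False show ?thesis
    by (simp add: sum.neutral)
qed

lemma poisson_k_coeff_recurrence:
  "real n * poisson_k_coeff k lam n = lam * (\<Sum>i=1..min k n. real i * poisson_k_coeff k lam (n - i))"
proof -
  have "real n * poisson_k_coeff k lam n
      = (\<Sum>c\<in>poisson_k_idx k n. \<Sum>i=1..k. real i * (real (c i) * poisson_k_weight k lam c))"
    unfolding poisson_k_coeff_def sum_distrib_left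
  proof (rule sum.cong)
    fix c assume "c \<in> poisson_k_idx k n"
    then have "real n = (\<Sum>i=1..k. real i * real (c i))"
      unfolding poisson_k_idx_def by (auto simp flip: of_nat_mult of_nat_sum)
    then show "real n * poisson_k_weight k lam c
        = (\<Sum>i=1..k. real i * (real (c i) * poisson_k_weight k lam c))"
      by (simp add: sum_distrib_right mult.assoc)
  qed simp
  also have "\<dots> = (\<Sum>i=1..k. real i * (\<Sum>c\<in>poisson_k_idx k n. real (c i) * poisson_k_weight k lam c))"
    by (subst sum.swap) (simp only: sum_distrib_left)
  also have "\<dots> = (\<Sum>i=1..k. if i \<le> n then real i * (lam * poisson_k_coeff k lam (n - i)) else 0)"
    by (intro sum.cong) (simp_all add: sum_poisson_k_idx_mult_weight)
  also have "\<dots> = (\<Sum>i\<in>{1..k} \<inter> {i. i \<le> n}. real i * (lam * poisson_k_coeff k lam (n - i)))"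
    by (simp add: sum.inter_restrict)
  also have "{1..k} \<inter> {i. i \<le> n} = {1..min k n}"
    by auto
  also have "(\<Sum>i=1..min k n. real i * (lam * poisson_k_coeff k lam (n - i)))
      = lam * (\<Sum>i=1..min k n. real i * poisson_k_coeff k lam (n - i))"
    by (simp add: sum_distrib_left mult.left_commute)
  finally show ?thesis .
qed

lemma poisson_k_coeff_less_1:
  assumes lam: "0 \<le> lam" "lam < 2 / (real k + 1)" and "0 < n"
  shows "poisson_k_coeff k lam n < 1"
  using \<open>0 < n\<close>
proof (induction n rule: less_induct)
  case (less n)
  define m where "m = min k n"
  have coeff_le_1: "poisson_k_coeff k lam (n - i) \<le> 1" if "i \<in> {1..m}" for i
  proof (cases "n - i = 0")
    case True
    then show ?thesis by (simp add: poisson_k_coeff_0)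
  next
    case False
    with that show ?thesis
      using less.IH[of "n - i"] by (simp add: m_def)
  qed
  have "real n * poisson_k_coeff k lam n = lam * (\<Sum>i=1..m. real i * poisson_k_coeff k lam (n - i))"
    unfolding m_def by (rule poisson_k_coeff_recurrence)
  also have "\<dots> \<le> lam * (\<Sum>i=1..m. real i)"
    using lam(1) coeff_le_1 by (intro mult_left_mono sum_mono) (simp_all add: mult_left_le)
  also have "\<dots> = lam * (real m * (real m + 1)) / 2"
    using double_gauss_sum_from_Suc_0[of m, where 'a = real] by simp
  also have "\<dots> < real n"
  proof (cases "m = 0")
    case True
    with less.prems show ?thesis by simp
  next
    case False
    have "lam * (real m + 1) \<le> lam * (real k + 1)"
      using lam(1) by (intro mult_left_mono) (simp_all add: m_def)
    also have "\<dots> < 2"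
      using lam(2) by (simp add: less_divide_eq)
    finally have "real m * (lam * (real m + 1)) < real m * 2"
      using False by simp
    then have "lam * (real m * (real m + 1)) / 2 < real m"
      by (simp add: algebra_simps)
    also have "\<dots> \<le> real n" by (simp add: m_def)
    finally show ?thesis .
  qed
  finally show ?case
    using less.prems by simp
qed

lemma is_mode_iff_zero:
  assumes "0 \<le> lam" "lam < 2 / (real k + 1)"
  shows "is_mode k lam n \<longleftrightarrow> n = 0"
proof -
  have pmf_less: "poisson_k_pmf k lam m < poisson_k_pmf k lam 0" if "0 < m" for m
    using poisson_k_coeff_less_1[OF assms that] by (simp add: poisson_k_pmf_eq_coeff poisson_k_coeff_0)
  show ?thesis
  proof
    assume "is_mode k lam n"
    then have "poisson_k_pmf k lam 0 \<le> poisson_k_pmf k lam n"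
      unfolding is_mode_def ..
    with pmf_less[of n] show "n = 0"
      by linarith
  next
    assume "n = 0"
    with pmf_less show "is_mode k lam n"
      unfolding is_mode_def by (metis less_eq_real_def neq0_conv)
  qed
qed

lemma not_has_double_mode:
  assumes "0 \<le> lam" "lam < 2 / (real k + 1)"
  shows "\<not> has_double_mode k lam"
proof
  assume "has_double_mode k lam"
  then obtain m1 m2 where "m1 \<noteq> m2" "{n. is_mode k lam n} = {m1, m2}"
    unfolding has_double_mode_def by blast
  moreover have "{n. is_mode k lam n} = {0}"
    using is_mode_iff_zero[OF assms] by blast
  ultimately show False
    by (metis insertCI singletonD)
qed

theorem proposition2:
  fixes k :: nat and lam :: real
  assumes "k \<ge> 2"
    and "is_first_double_mode k lam"
  shows "lam \<ge> 2 / (real k + 1)"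
proof (rule ccontr)
  assume "\<not> ?thesis"
  moreover from assms(2) have "0 < lam" "has_double_mode k lam"
    unfolding is_first_double_mode_def by simp_all
  ultimately show False
    using not_has_double_mode[of lam k] by simp
qed

end
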